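(* Define the score \[r=\frac{\mathrm{mark}}{\mathrm{entry}}\cdot\frac{\mathrm{notional}}{\mathrm{account\ value}}.\] 1. The score is homogeneous of degree zero in $(\mathrm{notional},\mathrm{account\ value})$: for every $\alpha>0$, $r(\alpha\,\mathrm{notional},\alpha\,\mathrm{account\ value})=r(\mathrm{notional},\mathrm{account\ value})$. 2. Therefore a proportional split of an account preserves its score. 3. If no other winner shares the parent's score, a proportional split preserves the aggregate seizure under the queue rule ranked by $r$; that is, the queue rule is Sybil resistant.
   Context: Each winning account has a mark price, an entry price, a notional, an account value $>0$, and a haircutable endowment. A proportional split of an account into children $a=1,\dots,m$ uses fractions $\alpha_a>0$ with $\sum_a\alpha_a=1$. Each child has notional, account value and endowment equal to $\alpha_a$ times the parent's, and the same mark and entry prices. The queue rule with budget $B$ works as follows: - It processes winners in decreasing order of score. - Each processed winner $j$ with endowment $w_j$ has $\min\{w_j,\text{remaining budget}\}$ seized. - The seized amount is subtracted from the remaining budget. The queue rule is Sybil resistant for a split if the total seizure from the children equals the seizure from the unsplit parent. *)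

theory Defs
  imports Complex_Main
begin

text \<open>A winning account: mark price, entry price, notional, account value, haircutable endowment.\<close>
record account =
  mark :: real
  entry :: real
  notional :: real
  acct_value :: real
  endow :: real

definition score_fn :: "real \<Rightarrow> real \<Rightarrow> real \<Rightarrow> real \<Rightarrow> real" where
  "score_fn m e n v = (m / e) * (n / v)"

definition score :: "account \<Rightarrow> real" where
  "score a = score_fn (mark a) (entry a) (notional a) (acct_value a)"

definition split_child :: "real \<Rightarrow> account \<Rightarrow> account" where
  "split_child \<alpha> p = \<lparr>mark = mark p, entry = entry p, notional = \<alpha> * notional p,
                        acct_value = \<alpha> * acct_value p, endow = \<alpha> * endow p\<rparr>"

definition proportional_split :: "real list \<Rightarrow> account \<Rightarrow> account list" where
  "proportional_split \<alpha>s p = map (\<lambda>\<alpha>. split_child \<alpha> p) \<alpha>s"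

definition valid_fractions :: "real list \<Rightarrow> bool" where
  "valid_fractions \<alpha>s \<longleftrightarrow> \<alpha>s \<noteq> [] \<and> (\<forall>\<alpha>\<in>set \<alpha>s. \<alpha> > 0) \<and> sum_list \<alpha>s = 1"

fun seize_seq :: "real \<Rightarrow> real list \<Rightarrow> real" where
  "seize_seq B [] = 0"
| "seize_seq B (w # ws) = min w B + seize_seq (B - min w B) ws"

text \<open>Queue rule: winners processed in decreasing order of score (ties kept in
  input order, stable sort).\<close>
definition queue_total :: "real \<Rightarrow> account list \<Rightarrow> real" where
  "queue_total B ws = seize_seq B (map endow (sort_key (\<lambda>a. - score a) ws))"

end

theory Submission
  imports Defs
begin

text \<open>The score depends on notional and account value only through their ratio, so every
  child of a proportional split has the parent's score. If no other winner shares that score,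
  sorting by score places the children in one contiguous block exactly where the parent would
  stand. The queue then reaches this block with the same remaining budget, and from a block of
  endowments of one sign it seizes the minimum of the budget and the block's total; the
  children's endowments sum to the parent's.\<close>

lemma score_fn_scale:
  fixes \<alpha> :: real
  assumes "\<alpha> \<noteq> 0"
  shows "score_fn m e (\<alpha> * n) (\<alpha> * v) = score_fn m e n v"
  using assms by (simp add: score_fn_def)

lemma score_split_child:
  assumes "\<alpha> \<noteq> 0"
  shows "score (split_child \<alpha> p) = score p"
  using score_fn_scale[OF assms] by (simp add: score_def split_child_def)

lemma score_proportional_split:
  assumes "\<forall>\<alpha>\<in>set \<alpha>s. \<alpha> \<noteq> 0" and "c \<in> set (proportional_split \<alpha>s p)"
  shows "score c = score p"
  using assms score_split_child by (auto simp: proportional_split_def)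

lemma seize_seq_append:
  "seize_seq B (xs @ ys) = seize_seq B xs + seize_seq (B - seize_seq B xs) ys"
  by (induction xs arbitrary: B) (auto simp: algebra_simps)

lemma seize_seq_le_budget: "B \<ge> 0 \<Longrightarrow> seize_seq B ws \<le> B"
proof (induction ws arbitrary: B)
  case (Cons w ws)
  show ?case using Cons.IH[of "B - min w B"] by simp
qed simp

lemma seize_seq_same_sign:
  assumes "B \<ge> 0" and "(\<forall>w\<in>set ws. w \<ge> 0) \<or> (\<forall>w\<in>set ws. w \<le> 0)"
  shows "seize_seq B ws = min (sum_list ws) B"
  using assms
proof (induction ws arbitrary: B)
  case (Cons w ws)
  have "seize_seq (B - min w B) ws = min (sum_list ws) (B - min w B)"
    using Cons.prems by (intro Cons.IH) auto
  moreover have "(w \<ge> 0 \<and> sum_list ws \<ge> 0) \<or> (w \<le> 0 \<and> sum_list ws \<le> 0)"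
    using Cons.prems(2) by (auto intro: sum_list_nonneg sum_list_nonpos)
  ultimately show ?case using Cons.prems(1) by (auto simp: min_def)
qed simp

lemma seize_seq_scaled:
  fixes w :: real
  assumes "B \<ge> 0" and "\<forall>\<alpha>\<in>set \<alpha>s. \<alpha> \<ge> 0" and "sum_list \<alpha>s = 1"
  shows "seize_seq B (map (\<lambda>\<alpha>. \<alpha> * w) \<alpha>s) = seize_seq B [w]"
proof -
  have "(\<forall>x\<in>set (map (\<lambda>\<alpha>. \<alpha> * w) \<alpha>s). x \<ge> 0) \<or> (\<forall>x\<in>set (map (\<lambda>\<alpha>. \<alpha> * w) \<alpha>s). x \<le> 0)"
    using assms(2) by (cases "w \<ge> 0") (auto simp: mult_nonneg_nonpos)
  then have "seize_seq B (map (\<lambda>\<alpha>. \<alpha> * w) \<alpha>s) = min (sum_list \<alpha>s * w) B"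
    using seize_seq_same_sign[OF assms(1)] by (simp add: sum_list_mult_const)
  then show ?thesis using assms(3) by simp
qed

lemma seize_seq_middle_cong:
  assumes "\<And>B'. B' \<ge> 0 \<Longrightarrow> seize_seq B' xs = seize_seq B' ys" and "B \<ge> 0"
  shows "seize_seq B (as @ xs @ bs) = seize_seq B (as @ ys @ bs)"
proof -
  define B' where "B' = B - seize_seq B as"
  have "B' \<ge> 0" using seize_seq_le_budget[OF assms(2)] by (simp add: B'_def)
  then have "seize_seq B' (xs @ bs) = seize_seq B' (ys @ bs)"
    using assms(1) by (simp add: seize_seq_append)
  then show ?thesis by (simp add: seize_seq_append flip: B'_def)
qed

lemma sorted_map_partition:
  fixes f :: "'a \<Rightarrow> 'b::linorder"
  assumes "sorted (map f xs)"
  shows "xs = [x\<leftarrow>xs. f x < k] @ [x\<leftarrow>xs. f x = k] @ [x\<leftarrow>xs. k < f x]"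
  using assms
proof (induction xs)
  case (Cons x xs)
  have IH: "xs = [x\<leftarrow>xs. f x < k] @ [x\<leftarrow>xs. f x = k] @ [x\<leftarrow>xs. k < f x]"
    using Cons by simp
  have ge: "\<forall>y\<in>set xs. f x \<le> f y" using Cons.prems by simp
  consider "f x < k" | "f x = k" | "k < f x" by fastforce
  then show ?case
  proof cases
    case 1
    then show ?thesis using IH by auto
  next
    case 2
    then have "[y\<leftarrow>xs. f y < k] = []" using ge by (auto simp: filter_empty_conv)
    then show ?thesis using IH 2 by simp
  next
    case 3
    then have "[y\<leftarrow>xs. f y < k] = []" "[y\<leftarrow>xs. f y = k] = []"
      using ge by (auto simp: filter_empty_conv)
    then show ?thesis using IH 3 by auto
  qed
qed simp

lemma sort_key_partition:
  fixes f :: "'a \<Rightarrow> 'b::linorder"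
  shows "sort_key f xs =
    sort_key f [x\<leftarrow>xs. f x < k] @ [x\<leftarrow>xs. f x = k] @ sort_key f [x\<leftarrow>xs. k < f x]"
  using sorted_map_partition[of f "sort_key f xs" k]
  by (simp only: sorted_sort_key sort_key_stable filter_sort simp_thms)

lemma sort_key_isolated_block:
  fixes f :: "'a \<Rightarrow> 'b::linorder"
  assumes "\<forall>c\<in>set cs. f c = k" and "\<forall>x\<in>set (xs @ ys). f x \<noteq> k"
  shows "sort_key f (xs @ cs @ ys) =
    sort_key f [x\<leftarrow>xs @ ys. f x < k] @ cs @ sort_key f [x\<leftarrow>xs @ ys. k < f x]"
  using assms sort_key_partition[of f "xs @ cs @ ys" k] by (simp add: filter_empty_conv)

lemma queue_total_proportional_split:
  assumes "B \<ge> 0" and "valid_fractions \<alpha>s" and "\<forall>a\<in>set (ws1 @ ws2). score a \<noteq> score p"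
  shows "queue_total B (ws1 @ proportional_split \<alpha>s p @ ws2) = queue_total B (ws1 @ [p] @ ws2)"
proof -
  have pos: "\<forall>\<alpha>\<in>set \<alpha>s. \<alpha> > 0" and sum: "sum_list \<alpha>s = 1"
    using assms(2) by (auto simp: valid_fractions_def)
  let ?f = "\<lambda>a. - score a"
  let ?lo = "map endow (sort_key ?f [x\<leftarrow>ws1 @ ws2. ?f x < - score p])"
  let ?hi = "map endow (sort_key ?f [x\<leftarrow>ws1 @ ws2. - score p < ?f x])"
  have block: "queue_total B (ws1 @ cs @ ws2) = seize_seq B (?lo @ map endow cs @ ?hi)"
    if "\<forall>c\<in>set cs. ?f c = - score p" for cs
    unfolding queue_total_def
    by (subst sort_key_isolated_block[OF that]) (use assms(3) in auto)
  have "\<forall>c\<in>set (proportional_split \<alpha>s p). ?f c = - score p"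
    using pos score_proportional_split[of \<alpha>s _ p] by auto
  then have "queue_total B (ws1 @ proportional_split \<alpha>s p @ ws2)
      = seize_seq B (?lo @ map endow (proportional_split \<alpha>s p) @ ?hi)"
    by (rule block)
  also have "\<dots> = seize_seq B (?lo @ map endow [p] @ ?hi)"
  proof (rule seize_seq_middle_cong[OF _ assms(1)])
    fix B' :: real
    assume "B' \<ge> 0"
    moreover have "map endow (proportional_split \<alpha>s p) = map (\<lambda>\<alpha>. \<alpha> * endow p) \<alpha>s"
      by (simp add: proportional_split_def split_child_def)
    ultimately show "seize_seq B' (map endow (proportional_split \<alpha>s p)) = seize_seq B' (map endow [p])"
      using seize_seq_scaled[of B' \<alpha>s "endow p"] pos sum by (auto intro: less_imp_le)
  qed
  also have "\<dots> = queue_total B (ws1 @ [p] @ ws2)"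
    by (rule block[symmetric]) simp
  finally show ?thesis .
qed

theorem mainTheorem6:
  shows "(\<forall>m e n v \<alpha>. \<alpha> > 0 \<longrightarrow> score_fn m e (\<alpha> * n) (\<alpha> * v) = score_fn m e n v)
    \<and> (\<forall>p \<alpha>s. valid_fractions \<alpha>s \<longrightarrow>
         (\<forall>c\<in>set (proportional_split \<alpha>s p). score c = score p))
    \<and> (\<forall>B p \<alpha>s ws1 ws2. B \<ge> 0 \<longrightarrow> valid_fractions \<alpha>s \<longrightarrow>
         acct_value p > 0 \<longrightarrow> (\<forall>a\<in>set (ws1 @ ws2). acct_value a > 0) \<longrightarrow>
         (\<forall>a\<in>set (ws1 @ ws2). score a \<noteq> score p) \<longrightarrow>
         queue_total B (ws1 @ proportional_split \<alpha>s p @ ws2) = queue_total B (ws1 @ p # ws2))"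
proof (intro conjI allI impI ballI)
  show "score_fn m e (\<alpha> * n) (\<alpha> * v) = score_fn m e n v" if "\<alpha> > 0" for m e n v \<alpha> :: real
    using that by (simp add: score_fn_scale)
  show "score c = score p"
    if "valid_fractions \<alpha>s" and "c \<in> set (proportional_split \<alpha>s p)" for p \<alpha>s c
    using that by (auto simp: valid_fractions_def intro: score_proportional_split)
  show "queue_total B (ws1 @ proportional_split \<alpha>s p @ ws2) = queue_total B (ws1 @ p # ws2)"
    if "B \<ge> 0" and "valid_fractions \<alpha>s" and "\<forall>a\<in>set (ws1 @ ws2). score a \<noteq> score p"
    for B p \<alpha>s ws1 ws2
    using queue_total_proportional_split[OF that] by simp
qed

end
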